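(* Let $1\le p\le n$, $\beta>0$, and $X\in\mathbb{R}^{n\times p}_*$. Let $\mathrm{T}_X\mathrm{St}_{X^\top X}=\{\xi\in\mathbb{R}^{n\times p}\mid \xi^\top X+X^\top\xi=0\}$ be the tangent space at $X$ of $\mathrm{St}_{X^\top X}=\{Y\in\mathbb{R}^{n\times p}\mid Y^\top Y=X^\top X\}$. The orthogonal projection $\mathrm{Proj}_{X,\beta}:\mathbb{R}^{n\times p}\to\mathrm{T}_X\mathrm{St}_{X^\top X}$ with respect to $g^\beta_X$ (i.e., the map characterized by $\mathrm{Proj}_{X,\beta}(Z)\in\mathrm{T}_X\mathrm{St}_{X^\top X}$ and $g^\beta_X(\xi,Z-\mathrm{Proj}_{X,\beta}(Z))=0$ for all $\xi\in\mathrm{T}_X\mathrm{St}_{X^\top X}$) is given, for all $Z\in\mathbb{R}^{n\times p}$, by \[\mathrm{Proj}_{X,\beta}(Z)=X(X^\top X)^{-1}\operatorname{skew}(X^\top Z)+\big(\mathrm{I}_n-X(X^\top X)^{-1}X^\top\big)Z.\]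
   Context: $\mathbb{R}^{n\times p}_*$ denotes the set of full-rank (rank $p$) real $n\times p$ matrices, and $\operatorname{skew}(A)=(A-A^\top)/2$. For $\beta>0$ and $X\in\mathbb{R}^{n\times p}_*$, the $\beta$-metric is the inner product on $\mathbb{R}^{n\times p}$ given by \[g^\beta_X(\xi,\zeta)=\mathrm{trace}\Big(\xi^\top\big(\mathrm{I}_n-(1-\beta)X(X^\top X)^{-1}X^\top\big)\zeta\,(X^\top X)^{-1}\Big),\qquad \xi,\zeta\in\mathbb{R}^{n\times p}.\] *)

theory Defs
  imports "HOL-Analysis.Analysis"
begin

text \<open>n x p real matrices are represented as real^'p^'n (rows indexed by 'n, columns by 'p).\<close>

definition skew :: "real^'p^'p \<Rightarrow> real^'p^'p" where
  "skew A = (1/2) *\<^sub>R (A - transpose A)"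

definition beta_metric :: "real \<Rightarrow> real^'p^'n \<Rightarrow> real^'p^'n \<Rightarrow> real^'p^'n \<Rightarrow> real" where
  "beta_metric \<beta> X \<xi> \<zeta> =
     trace (transpose \<xi> ** (mat 1 - (1 - \<beta>) *\<^sub>R (X ** matrix_inv (transpose X ** X) ** transpose X))
            ** \<zeta> ** matrix_inv (transpose X ** X))"

definition tangent_St :: "real^'p^'n \<Rightarrow> (real^'p^'n) set" where
  "tangent_St X = {\<xi>. transpose \<xi> ** X + transpose X ** \<xi> = 0}"

definition proj_formula :: "real^'p^'n \<Rightarrow> real^'p^'n \<Rightarrow> real^'p^'n" where
  "proj_formula X Z =
     X ** matrix_inv (transpose X ** X) ** skew (transpose X ** Z)
     + (mat 1 - X ** matrix_inv (transpose X ** X) ** transpose X) ** Z"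

end

theory Submission
  imports Defs
begin

(* Let G = X^T X, invertible because X has full column rank, and let Q = X G^-1 X^T be the
   orthogonal projector onto the column space of X. Then
   g^beta_X(xi, zeta) = tr (xi^T (I - (1 - beta) Q) zeta G^-1), and
   I - (1 - beta) Q = (I - Q)^T (I - Q) + beta Q^T Q writes g^beta_X(D, D) as a sum of two
   squared Frobenius norms; so g^beta_X is positive definite for beta > 0, and orthogonal
   projections onto T_X St are unique.
   For the formula P: X^T (P Z) = skew (X^T Z), so P Z is tangent, and Z - P Z = X G^-1 M
   with M = X^T Z - skew (X^T Z) symmetric. As Q X = X, the weight I - (1 - beta) Q acts on
   Z - P Z as multiplication by beta, so pairing with a tangent xi gives
   beta tr ((xi^T X) (G^-1 M G^-1)), the trace of a skew-symmetric times a symmetric matrix,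
   which vanishes. *)

lemma matrix_add_rdistrib: "((A::'a::semiring_1^'m^'n) + B) ** C = A ** C + B ** C"
  by (simp add: matrix_matrix_mult_def vec_eq_iff distrib_right sum.distrib)

lemma matrix_diff_ldistrib: "(A::'a::ring_1^'m^'n) ** (B - C) = A ** B - A ** C"
  by (simp add: matrix_matrix_mult_def vec_eq_iff right_diff_distrib sum_subtractf)

lemma matrix_diff_rdistrib: "((A::'a::ring_1^'m^'n) - B) ** C = A ** C - B ** C"
  by (simp add: matrix_matrix_mult_def vec_eq_iff left_diff_distrib sum_subtractf)

lemma transpose_diff: "transpose ((A::'a::ab_group_add^'m^'n) - B) = transpose A - transpose B"
  by (simp add: transpose_def vec_eq_iff)

lemma trace_transpose: "trace (transpose (A::'a::semiring_1^'n^'n)) = trace A"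
  by (simp add: trace_def transpose_def)

lemma trace_scaleR: "trace (k *\<^sub>R (A::real^'n^'n)) = k * trace A"
  by (simp add: trace_def sum_distrib_left)

lemma trace_skew_symmetric_mult_symmetric:
  fixes A B :: "real^'n^'n"
  assumes "transpose A = - A" and "transpose B = B"
  shows "trace (A ** B) = 0"
proof -
  have "trace (A ** B) = trace (transpose (A ** B))"
    by (rule trace_transpose[symmetric])
  also have "\<dots> = trace (B ** (- A))"
    by (simp only: matrix_transpose_mul assms)
  also have "\<dots> = - trace (B ** A)"
    by (simp add: matrix_matrix_mult_def trace_def sum_negf)
  also have "\<dots> = - trace (A ** B)"
    by (simp add: trace_mul_sym[of B A])
  finally show ?thesis
    by simp
qed

lemma trace_transpose_mult_self: "trace (transpose (A::real^'n^'m) ** A) = (norm A)\<^sup>2"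
proof -
  have "trace (transpose A ** A) = (\<Sum>j\<in>UNIV. \<Sum>i\<in>UNIV. A$i$j * A$i$j)"
    by (simp add: trace_def matrix_matrix_mult_def transpose_def)
  also have "\<dots> = (\<Sum>i\<in>UNIV. \<Sum>j\<in>UNIV. A$i$j * A$i$j)"
    by (rule sum.swap)
  also have "\<dots> = inner A A"
    by (simp add: inner_vec_def)
  finally show ?thesis
    by (simp add: power2_norm_eq_inner)
qed

lemma matrix_inv_right:
  fixes G :: "'a::semiring_1^'n^'n"
  assumes "invertible G"
  shows "G ** matrix_inv G = mat 1"
  using someI_ex[OF assms[unfolded invertible_def]] by (simp add: matrix_inv_def)

lemma matrix_inv_left:
  fixes G :: "'a::semiring_1^'n^'n"
  assumes "invertible G"
  shows "matrix_inv G ** G = mat 1"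
  using someI_ex[OF assms[unfolded invertible_def]] by (simp add: matrix_inv_def)

lemma invertible_gram:
  fixes X :: "real^'p^'n"
  assumes "rank X = CARD('p)"
  shows "invertible (transpose X ** X)"
proof -
  have "v = 0" if "(transpose X ** X) *v v = 0" for v
  proof -
    have "inner (X *v v) (X *v v) = inner (v v* transpose X) (X *v v)"
      by simp
    also have "\<dots> = inner v (transpose X *v (X *v v))"
      by (rule dot_lmul_matrix)
    also have "\<dots> = inner v ((transpose X ** X) *v v)"
      by (simp add: matrix_vector_mul_assoc)
    finally have "X *v v = X *v 0"
      using that by simp
    then show "v = 0"
      using assms full_rank_injective by (blast dest: injD)
  qed
  then show ?thesis
    using matrix_left_invertible_ker invertible_left_inverse by blast
qed

lemma transpose_skew: "transpose (skew A) = - skew A"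
  by (simp add: skew_def vec_eq_iff transpose_def algebra_simps)

lemma transpose_diff_skew: "transpose (A - skew A) = A - skew A"
  by (simp add: skew_def vec_eq_iff transpose_def algebra_simps)

lemma tangent_St_diff:
  assumes "\<xi> \<in> tangent_St X" and "\<zeta> \<in> tangent_St X"
  shows "\<xi> - \<zeta> \<in> tangent_St X"
proof -
  have "transpose (\<xi> - \<zeta>) ** X + transpose X ** (\<xi> - \<zeta>)
      = (transpose \<xi> ** X + transpose X ** \<xi>) - (transpose \<zeta> ** X + transpose X ** \<zeta>)"
    by (simp add: transpose_diff matrix_diff_rdistrib matrix_diff_ldistrib)
  with assms show ?thesis
    by (simp add: tangent_St_def)
qed

lemma orthogonal_projection_unique:
  fixes g :: "'a::ab_group_add \<Rightarrow> 'a \<Rightarrow> real"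
  assumes diff_right: "\<And>\<xi> a b. g \<xi> (a - b) = g \<xi> a - g \<xi> b"
    and definite: "\<And>d. d \<in> T \<Longrightarrow> g d d = 0 \<Longrightarrow> d = 0"
    and T_diff: "\<And>a b. a \<in> T \<Longrightarrow> b \<in> T \<Longrightarrow> a - b \<in> T"
    and "a \<in> T" "\<forall>\<xi>\<in>T. g \<xi> (z - a) = 0"
    and "b \<in> T" "\<forall>\<xi>\<in>T. g \<xi> (z - b) = 0"
  shows "a = b"
proof -
  have "a - b \<in> T"
    using assms T_diff by blast
  moreover have "g (a - b) (a - b) = g (a - b) (z - b) - g (a - b) (z - a)"
    using diff_right[of "a - b" "z - b" "z - a"] by simp
  ultimately have "g (a - b) (a - b) = 0"
    using assms by simp
  with \<open>a - b \<in> T\<close> show ?thesis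
    using definite by fastforce
qed

locale full_column_rank =
  fixes X :: "real^'p^'n"
  assumes rank_X: "rank X = CARD('p)"
begin

definition gram_inv :: "real^'p^'p" where
  "gram_inv = matrix_inv (transpose X ** X)"

definition range_proj :: "real^'n^'n" where
  "range_proj = X ** gram_inv ** transpose X"

lemma gram_inv_left: "gram_inv ** (transpose X ** X) = mat 1"
  unfolding gram_inv_def using matrix_inv_left[OF invertible_gram[OF rank_X]] .

lemma gram_inv_right: "transpose X ** X ** gram_inv = mat 1"
  unfolding gram_inv_def using matrix_inv_right[OF invertible_gram[OF rank_X]] .

lemma mult_gram_inv_cancel: "A ** gram_inv ** transpose X ** X = A"
  by (simp add: matrix_mul_assoc[symmetric] gram_inv_left)

lemma transpose_gram_inv: "transpose gram_inv = gram_inv"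
proof -
  have "transpose gram_inv = transpose gram_inv ** (transpose X ** X ** gram_inv)"
    by (simp add: gram_inv_right)
  also have "\<dots> = transpose (transpose X ** X ** gram_inv) ** gram_inv"
    by (simp add: matrix_transpose_mul matrix_mul_assoc)
  finally show ?thesis
    by (simp add: gram_inv_right)
qed

lemma range_proj_X: "range_proj ** X = X"
  unfolding range_proj_def by (rule mult_gram_inv_cancel)

lemma transpose_range_proj: "transpose range_proj = range_proj"
  unfolding range_proj_def by (simp add: matrix_transpose_mul matrix_mul_assoc transpose_gram_inv)

lemma range_proj_idem: "range_proj ** range_proj = range_proj"
proof -
  have "range_proj ** range_proj = (range_proj ** X) ** gram_inv ** transpose X"
    by (simp add: range_proj_def matrix_mul_assoc)
  also have "\<dots> = range_proj"
    by (simp only: range_proj_X) (simp add: range_proj_def)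
  finally show ?thesis .
qed

lemma transpose_X_range_proj: "transpose X ** range_proj = transpose X"
proof -
  have "transpose X ** range_proj = transpose (transpose range_proj ** X)"
    by (simp add: matrix_transpose_mul)
  then show ?thesis
    by (simp add: transpose_range_proj range_proj_X)
qed

lemma beta_metric_eq:
  "beta_metric \<beta> X \<xi> \<zeta>
     = trace (transpose \<xi> ** (mat 1 - (1 - \<beta>) *\<^sub>R range_proj) ** \<zeta> ** gram_inv)"
  unfolding beta_metric_def range_proj_def gram_inv_def ..

lemma proj_formula_eq:
  "proj_formula X Z = X ** gram_inv ** skew (transpose X ** Z) + (mat 1 - range_proj) ** Z"
  unfolding proj_formula_def range_proj_def gram_inv_def ..

lemma beta_metric_diff_right:
  "beta_metric \<beta> X \<xi> (a - b) = beta_metric \<beta> X \<xi> a - beta_metric \<beta> X \<xi> b"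
  unfolding beta_metric_eq by (simp add: matrix_diff_ldistrib matrix_diff_rdistrib trace_sub)

lemma trace_gram_inv_weighted_eq_norm:
  fixes Y :: "real^'p^'m"
  shows "trace (transpose Y ** Y ** gram_inv) = (norm (Y ** gram_inv ** transpose X))\<^sup>2"
proof -
  have "trace (transpose Y ** Y ** gram_inv) = trace (gram_inv ** (transpose Y ** Y))"
    by (rule trace_mul_sym)
  also have "\<dots> = trace (gram_inv ** transpose Y ** Y ** gram_inv ** transpose X ** X)"
    by (simp add: mult_gram_inv_cancel matrix_mul_assoc)
  also have "\<dots> = trace (X ** (gram_inv ** transpose Y ** Y ** gram_inv ** transpose X))"
    by (rule trace_mul_sym)
  also have "\<dots> = trace (transpose (Y ** gram_inv ** transpose X) ** (Y ** gram_inv ** transpose X))"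
    by (simp add: matrix_transpose_mul transpose_gram_inv matrix_mul_assoc)
  finally show ?thesis
    by (simp add: trace_transpose_mult_self)
qed

lemma beta_metric_self_eq_0:
  assumes "\<beta> > 0" and "beta_metric \<beta> X D D = 0"
  shows "D = 0"
proof -
  let ?Q = range_proj
  define N where "N Y = (norm (Y ** gram_inv ** transpose X))\<^sup>2" for Y :: "real^'p^'n"
  have weight: "mat 1 - (1 - \<beta>) *\<^sub>R ?Q
      = transpose (mat 1 - ?Q) ** (mat 1 - ?Q) + \<beta> *\<^sub>R (transpose ?Q ** ?Q)"
    by (simp add: transpose_diff transpose_range_proj range_proj_idem matrix_diff_ldistrib
        matrix_diff_rdistrib algebra_simps)
  have "beta_metric \<beta> X D D = N ((mat 1 - ?Q) ** D) + \<beta> * N (?Q ** D)"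
    unfolding beta_metric_eq weight N_def trace_gram_inv_weighted_eq_norm[symmetric]
    by (simp add: matrix_add_ldistrib matrix_add_rdistrib scalar_matrix_assoc[symmetric]
        matrix_scalar_ac trace_add trace_scaleR matrix_transpose_mul matrix_mul_assoc)
  moreover have "N Y \<ge> 0" for Y
    by (simp add: N_def)
  ultimately have "N ((mat 1 - ?Q) ** D) = 0 \<and> \<beta> * N (?Q ** D) = 0"
    using assms by (simp add: add_nonneg_eq_0_iff)
  then have "N ((mat 1 - ?Q) ** D) = 0" and "N (?Q ** D) = 0"
    using assms(1) by simp_all
  moreover have "Y = 0" if "N Y = 0" for Y
  proof -
    have "Y = (Y ** gram_inv ** transpose X) ** X"
      by (simp add: mult_gram_inv_cancel)
    with that show ?thesis
      by (simp add: N_def)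
  qed
  ultimately have "(mat 1 - ?Q) ** D = 0" and "?Q ** D = 0"
    by blast+
  then show ?thesis
    by (simp add: matrix_diff_rdistrib)
qed

lemma transpose_X_proj_formula: "transpose X ** proj_formula X Z = skew (transpose X ** Z)"
  unfolding proj_formula_eq
  by (simp add: matrix_add_ldistrib matrix_diff_ldistrib matrix_diff_rdistrib matrix_mul_assoc
      gram_inv_right transpose_X_range_proj)

lemma proj_formula_in_tangent_St: "proj_formula X Z \<in> tangent_St X"
proof -
  have "transpose (proj_formula X Z) ** X = transpose (transpose X ** proj_formula X Z)"
    by (simp add: matrix_transpose_mul)
  then show ?thesis
    unfolding tangent_St_def by (simp add: transpose_X_proj_formula transpose_skew)
qed

lemma beta_metric_proj_formula_orthogonal:
  assumes "\<xi> \<in> tangent_St X"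
  shows "beta_metric \<beta> X \<xi> (Z - proj_formula X Z) = 0"
proof -
  define M where "M = transpose X ** Z - skew (transpose X ** Z)"
  have residual: "Z - proj_formula X Z = X ** gram_inv ** M"
    unfolding proj_formula_eq M_def range_proj_def
    by (simp add: matrix_diff_ldistrib matrix_diff_rdistrib matrix_mul_assoc)
  have "(mat 1 - (1 - \<beta>) *\<^sub>R range_proj) ** (X ** gram_inv ** M)
      = X ** gram_inv ** M - (1 - \<beta>) *\<^sub>R (range_proj ** (X ** gram_inv ** M))"
    by (simp add: matrix_diff_rdistrib scalar_matrix_assoc)
  also have "\<dots> = \<beta> *\<^sub>R (X ** gram_inv ** M)"
    by (simp add: matrix_mul_assoc range_proj_X algebra_simps)
  finally have weighted: "(mat 1 - (1 - \<beta>) *\<^sub>R range_proj) ** (Z - proj_formula X Z)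
      = \<beta> *\<^sub>R (X ** gram_inv ** M)"
    unfolding residual .
  have skew_part: "transpose (transpose \<xi> ** X) = - (transpose \<xi> ** X)"
    using assms unfolding tangent_St_def
    by (simp add: matrix_transpose_mul eq_neg_iff_add_eq_0 add.commute)
  have sym_part: "transpose (gram_inv ** M ** gram_inv) = gram_inv ** M ** gram_inv"
    unfolding M_def
    by (simp add: matrix_transpose_mul transpose_gram_inv transpose_diff_skew matrix_mul_assoc)
  have "beta_metric \<beta> X \<xi> (Z - proj_formula X Z)
      = trace (transpose \<xi> ** ((mat 1 - (1 - \<beta>) *\<^sub>R range_proj) ** (Z - proj_formula X Z))
          ** gram_inv)"
    unfolding beta_metric_eq by (simp only: matrix_mul_assoc)
  also have "\<dots> = \<beta> * trace ((transpose \<xi> ** X) ** (gram_inv ** M ** gram_inv))"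
    unfolding weighted
    by (simp add: matrix_scalar_ac scalar_matrix_assoc[symmetric] trace_scaleR matrix_mul_assoc)
  also have "\<dots> = 0"
    using trace_skew_symmetric_mult_symmetric[OF skew_part sym_part] by simp
  finally show ?thesis .
qed

end

theorem proposition4:
  fixes X :: "real^'p^'n" and \<beta> :: real
  assumes "CARD('p) \<le> CARD('n)"
    and "\<beta> > 0"
    and "rank X = CARD('p)"
  shows "(\<forall>Z. proj_formula X Z \<in> tangent_St X \<and>
              (\<forall>\<xi>\<in>tangent_St X. beta_metric \<beta> X \<xi> (Z - proj_formula X Z) = 0))
       \<and> (\<forall>P. (\<forall>Z. P Z \<in> tangent_St X \<and>
                   (\<forall>\<xi>\<in>tangent_St X. beta_metric \<beta> X \<xi> (Z - P Z) = 0))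
             \<longrightarrow> (\<forall>Z. P Z = proj_formula X Z))"
proof -
  \<comment> \<open>The hypothesis CARD('p) \<le> CARD('n) is implied by the rank condition and not needed.\<close>
  interpret full_column_rank X
    using assms(3) by unfold_locales
  have proj: "proj_formula X Z \<in> tangent_St X
      \<and> (\<forall>\<xi>\<in>tangent_St X. beta_metric \<beta> X \<xi> (Z - proj_formula X Z) = 0)" for Z
    using proj_formula_in_tangent_St beta_metric_proj_formula_orthogonal by blast
  have "P Z = proj_formula X Z"
    if "\<forall>Z. P Z \<in> tangent_St X \<and> (\<forall>\<xi>\<in>tangent_St X. beta_metric \<beta> X \<xi> (Z - P Z) = 0)"
    for P Z
    by (rule orthogonal_projection_unique[where g = "beta_metric \<beta> X" and T = "tangent_St X" and z = Z])
       (use that proj beta_metric_diff_right beta_metric_self_eq_0[OF assms(2)] tangent_St_diff in blast)+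
  with proj show ?thesis
    by blast
qed

end
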